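(* For every finite group $G$, every block of the power semigroup $\mathcal{P}(G)$ divides $G$. Consequently, for every pseudovariety of groups $\mathbf{H}$, one has $\mathbf{PH}\subseteq\mathbf{BH}$.
   Context: For a finite semigroup $S$, $\mathcal{P}(S)$ is the semigroup of all subsets of $S$ under $AB=\{ab: a\in A, b\in B\}$. A semigroup $A$ divides $B$ if $A$ is a homomorphic image of a subsemigroup of $B$. Blocks: let $U$ be the union of all subgroups of a finite semigroup $S$ and let $\rho$ be the smallest equivalence relation on $U$ containing the restrictions to $U$ of Green's relations $\mathcal{L}$ and $\mathcal{R}$. A block of $S$ is the Rees quotient $T/I$, where $T$ is the subsemigroup of $S$ generated by a $\rho$-class and $I$ is the ideal of $T$ consisting of the elements of $T$ not lying in the $\mathcal{D}$-class (of $S$) of the generators. For a pseudovariety of groups $\mathbf{H}$: $\mathbf{PH}$ is the pseudovariety of semigroups generated by all $\mathcal{P}(G)$ with $G\in\mathbf{H}$, and $\mathbf{BH}$ is the class of all finite semigroups all of whose blocks belong to $\mathbf{H}$ (blocks here being regarded as members of $\mathbf{H}$ when they divide a group of $\mathbf{H}$, i.e. $\mathbf{BV}$ is the class of finite semigroups whose blocks lie in $\mathbf{V}$, for $\mathbf{V}$ the pseudovariety considered). *)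

theory Defs
  imports "HOL-Algebra.Coset"
begin

definition semigrp :: "'a set \<Rightarrow> ('a \<Rightarrow> 'a \<Rightarrow> 'a) \<Rightarrow> bool" where
  "semigrp S m \<longleftrightarrow> (\<forall>x\<in>S. \<forall>y\<in>S. m x y \<in> S) \<and>
     (\<forall>x\<in>S. \<forall>y\<in>S. \<forall>z\<in>S. m (m x y) z = m x (m y z))"

definition is_subgrp :: "'a set \<Rightarrow> ('a \<Rightarrow> 'a \<Rightarrow> 'a) \<Rightarrow> 'a set \<Rightarrow> bool" where
  "is_subgrp S m H \<longleftrightarrow> H \<subseteq> S \<and> (\<forall>x\<in>H. \<forall>y\<in>H. m x y \<in> H) \<and>
     (\<exists>e\<in>H. \<forall>x\<in>H. m e x = x \<and> m x e = x \<and> (\<exists>y\<in>H. m x y = e \<and> m y x = e))"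

definition grp_union :: "'a set \<Rightarrow> ('a \<Rightarrow> 'a \<Rightarrow> 'a) \<Rightarrow> 'a set" where
  "grp_union S m = \<Union>{H. is_subgrp S m H}"

text \<open>Green's relations (with S^1 x = {x} \<union> S x, etc.).\<close>
definition greenL :: "'a set \<Rightarrow> ('a \<Rightarrow> 'a \<Rightarrow> 'a) \<Rightarrow> 'a \<Rightarrow> 'a \<Rightarrow> bool" where
  "greenL S m x y \<longleftrightarrow> x \<in> S \<and> y \<in> S \<and>
     insert x ((\<lambda>s. m s x) ` S) = insert y ((\<lambda>s. m s y) ` S)"

definition greenR :: "'a set \<Rightarrow> ('a \<Rightarrow> 'a \<Rightarrow> 'a) \<Rightarrow> 'a \<Rightarrow> 'a \<Rightarrow> bool" where
  "greenR S m x y \<longleftrightarrow> x \<in> S \<and> y \<in> S \<and>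
     insert x ((\<lambda>s. m x s) ` S) = insert y ((\<lambda>s. m y s) ` S)"

definition greenD :: "'a set \<Rightarrow> ('a \<Rightarrow> 'a \<Rightarrow> 'a) \<Rightarrow> 'a \<Rightarrow> 'a \<Rightarrow> bool" where
  "greenD S m x y \<longleftrightarrow> (\<exists>z. greenL S m x z \<and> greenR S m z y)"

definition rho :: "'a set \<Rightarrow> ('a \<Rightarrow> 'a \<Rightarrow> 'a) \<Rightarrow> ('a \<times> 'a) set" where
  "rho S m = (Id_on (grp_union S m) \<union>
      {(x, y). x \<in> grp_union S m \<and> y \<in> grp_union S m \<and> (greenL S m x y \<or> greenR S m x y)})\<^sup>+"

inductive_set gen_subsemigrp :: "('a \<Rightarrow> 'a \<Rightarrow> 'a) \<Rightarrow> 'a set \<Rightarrow> 'a set"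
  for m :: "'a \<Rightarrow> 'a \<Rightarrow> 'a" and C :: "'a set" where
  base: "c \<in> C \<Longrightarrow> c \<in> gen_subsemigrp m C"
| mult: "x \<in> gen_subsemigrp m C \<Longrightarrow> y \<in> gen_subsemigrp m C \<Longrightarrow> m x y \<in> gen_subsemigrp m C"

definition block_ideal :: "'a set \<Rightarrow> ('a \<Rightarrow> 'a \<Rightarrow> 'a) \<Rightarrow> 'a set \<Rightarrow> 'a set" where
  "block_ideal S m C = {t \<in> gen_subsemigrp m C. \<not> (\<exists>c\<in>C. greenD S m c t)}"

text \<open>The Rees quotient T/I, with elements Some t (t \<in> T - I) and the zero None
  (present only when I is nonempty).\<close>
definition block_carrier :: "'a set \<Rightarrow> ('a \<Rightarrow> 'a \<Rightarrow> 'a) \<Rightarrow> 'a set \<Rightarrow> 'a option set" where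
  "block_carrier S m C = Some ` (gen_subsemigrp m C - block_ideal S m C) \<union>
     (if block_ideal S m C = {} then {} else {None})"

definition block_mult :: "'a set \<Rightarrow> ('a \<Rightarrow> 'a \<Rightarrow> 'a) \<Rightarrow> 'a set
    \<Rightarrow> 'a option \<Rightarrow> 'a option \<Rightarrow> 'a option" where
  "block_mult S m C a b = (case (a, b) of
      (Some x, Some y) \<Rightarrow> (if m x y \<in> block_ideal S m C then None else Some (m x y))
    | _ \<Rightarrow> None)"

text \<open>The blocks of S are the Rees quotients associated with the \<rho>-classes.\<close>
definition rho_classes :: "'a set \<Rightarrow> ('a \<Rightarrow> 'a \<Rightarrow> 'a) \<Rightarrow> 'a set set" where
  "rho_classes S m = grp_union S m // rho S m"

definition divides :: "'a set \<Rightarrow> ('a \<Rightarrow> 'a \<Rightarrow> 'a) \<Rightarrow> 'b set \<Rightarrow> ('b \<Rightarrow> 'b \<Rightarrow> 'b) \<Rightarrow> bool" where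
  "divides A mA B mB \<longleftrightarrow> (\<exists>T \<phi>. T \<subseteq> B \<and> (\<forall>x\<in>T. \<forall>y\<in>T. mB x y \<in> T) \<and>
      \<phi> ` T = A \<and> (\<forall>x\<in>T. \<forall>y\<in>T. \<phi> (mB x y) = mA (\<phi> x) (\<phi> y)))"

end

theory Submission
  imports Defs "HOL-Algebra.Group_Action"
begin

(* A nonempty member X of a subgroup of P(G) is a coset xE = Ex of a subgroup E of G (finiteness makes
  the idempotent identity of that subgroup a subgroup of G); so x normalizes E, and E is both
  the left and the right stabilizer of X.  Green's relation L preserves right stabilizers and R
  preserves left stabilizers, so all members of a rho-class are cosets gE, g in the normalizer
  N(E), of one and the same E.  These cosets form a copy of N(E)/E inside P(G) whose elements are
  pairwise R-related; hence the block has no zero and is a subsemigroup of a homomorphic image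
  of N(E), i.e. it divides G.  The rho-class of the empty set fits the same scheme with E empty. *)

definition right_stabilizer :: "('a, 'b) monoid_scheme \<Rightarrow> 'a set \<Rightarrow> 'a set" where
  "right_stabilizer G X = {g \<in> carrier G. X #>\<^bsub>G\<^esub> g = X}"

definition left_stabilizer :: "('a, 'b) monoid_scheme \<Rightarrow> 'a set \<Rightarrow> 'a set" where
  "left_stabilizer G X = {g \<in> carrier G. g <#\<^bsub>G\<^esub> X = X}"

lemma greenL_imp_mutual_factors:
  assumes "greenL S m x y"
  shows "x = y \<or> (\<exists>a\<in>S. \<exists>b\<in>S. x = m a y \<and> y = m b x)"
proof -
  have "x \<in> insert y ((\<lambda>s. m s y) ` S)" "y \<in> insert x ((\<lambda>s. m s x) ` S)"
    using assms unfolding greenL_def by (metis insertI1)+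
  then show ?thesis by (metis imageE insertE)
qed

lemma greenR_imp_mutual_factors:
  assumes "greenR S m x y"
  shows "x = y \<or> (\<exists>a\<in>S. \<exists>b\<in>S. x = m y a \<and> y = m x b)"
proof -
  have "x \<in> insert y ((\<lambda>s. m y s) ` S)" "y \<in> insert x ((\<lambda>s. m x s) ` S)"
    using assms unfolding greenR_def by (metis insertI1)+
  then show ?thesis by (metis imageE insertE)
qed

lemma greenR_if_mutual_factors:
  assumes "semigrp S m" "x \<in> S" "y \<in> S" "a \<in> S" "b \<in> S" "x = m y a" "y = m x b"
  shows "greenR S m x y"
proof -
  have principal_le: "insert u (m u ` S) \<subseteq> insert v (m v ` S)"
    if "u \<in> S" "v \<in> S" "c \<in> S" "u = m v c" for u v c
  proof
    fix z assume "z \<in> insert u (m u ` S)"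
    then consider "z = u" | s where "s \<in> S" "z = m u s" by blast
    then show "z \<in> insert v (m v ` S)"
    proof cases
      case 1
      then show ?thesis using that by blast
    next
      case (2 s)
      then have "z = m v (m c s)" "m c s \<in> S"
        using assms(1) that unfolding semigrp_def by simp_all
      then show ?thesis by blast
    qed
  qed
  have "insert x (m x ` S) = insert y (m y ` S)"
    using principal_le[OF assms(2,3,4,6)] principal_le[OF assms(3,2,5,7)] by (rule subset_antisym)
  then show ?thesis unfolding greenR_def using assms(2,3) by simp
qed

lemma gen_subsemigrp_subset:
  assumes "C \<subseteq> Q" "\<And>x y. x \<in> Q \<Longrightarrow> y \<in> Q \<Longrightarrow> m x y \<in> Q"
  shows "gen_subsemigrp m C \<subseteq> Q"
proof
  fix t assume "t \<in> gen_subsemigrp m C"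
  then show "t \<in> Q" by induction (use assms in auto)
qed

lemma block_ideal_eq_empty:
  assumes "c \<in> C" "c \<in> S" "\<And>t. t \<in> gen_subsemigrp m C \<Longrightarrow> greenR S m c t"
  shows "block_ideal S m C = {}"
proof -
  have "greenL S m c c" using assms(2) unfolding greenL_def by blast
  then show ?thesis using assms unfolding block_ideal_def greenD_def by blast
qed

lemma block_carrier_no_zero:
  "block_ideal S m C = {} \<Longrightarrow> block_carrier S m C = Some ` gen_subsemigrp m C"
  unfolding block_carrier_def by simp

lemma block_mult_no_zero:
  "block_ideal S m C = {} \<Longrightarrow> block_mult S m C (Some a) (Some b) = Some (m a b)"
  unfolding block_mult_def by simp

lemma divides_if_subsemigroup_of_hom_image:
  assumes "N \<subseteq> B" "\<And>x y. x \<in> N \<Longrightarrow> y \<in> N \<Longrightarrow> mB x y \<in> N"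
    and "\<And>x y. x \<in> N \<Longrightarrow> y \<in> N \<Longrightarrow> \<phi> (mB x y) = mA (\<phi> x) (\<phi> y)"
    and "A \<subseteq> \<phi> ` N" "\<And>a b. a \<in> A \<Longrightarrow> b \<in> A \<Longrightarrow> mA a b \<in> A"
  shows "divides A mA B mB"
  unfolding divides_def
proof (intro exI conjI)
  let ?T = "{x \<in> N. \<phi> x \<in> A}"
  show "?T \<subseteq> B" using assms(1) by blast
  show "\<forall>x\<in>?T. \<forall>y\<in>?T. mB x y \<in> ?T" using assms(2,3,5) by simp
  show "\<forall>x\<in>?T. \<forall>y\<in>?T. \<phi> (mB x y) = mA (\<phi> x) (\<phi> y)" using assms(3) by simp
  show "\<phi> ` ?T = A" using assms(4) by blast
qed

context group
begin

abbreviation power_grp_union :: "'a set set" where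
  "power_grp_union \<equiv> grp_union (Pow (carrier G)) (set_mult G)"

lemma semigrp_power: "semigrp (Pow (carrier G)) (set_mult G)"
  unfolding semigrp_def by (simp add: setmult_subset_G set_mult_assoc)

lemma grp_union_subset: "X \<in> power_grp_union \<Longrightarrow> X \<subseteq> carrier G"
  unfolding grp_union_def is_subgrp_def by auto

lemma finite_idempotent_subgroup:
  assumes "finite (carrier G)" "E \<subseteq> carrier G" "E \<noteq> {}" "E <#> E = E"
  shows "subgroup E G"
proof -
  have closed: "a \<otimes> b \<in> E" if "a \<in> E" "b \<in> E" for a b
    using assms(4) that unfolding set_mult_def by blast
  have solvable: "\<exists>x\<in>E. a \<otimes> x = b" if "a \<in> E" "b \<in> E" for a b
  proof -
    have "(\<lambda>x. a \<otimes> x) ` E = E"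
    proof (rule endo_inj_surj)
      show "finite E" using assms(1,2) finite_subset by blast
      show "(\<lambda>x. a \<otimes> x) ` E \<subseteq> E" using closed that by blast
      show "inj_on (\<lambda>x. a \<otimes> x) E" using that assms(2) by (auto intro!: inj_onI simp: subset_iff)
    qed
    then show ?thesis using that by (metis imageE)
  qed
  have one: "\<one> \<in> E"
  proof -
    obtain a where a: "a \<in> E" using assms(3) by blast
    then obtain x where "x \<in> E" "a \<otimes> x = a" using solvable by blast
    moreover have "a \<in> carrier G" "x \<in> carrier G" using a \<open>x \<in> E\<close> assms(2) by auto
    ultimately show ?thesis by simp
  qed
  have "inv a \<in> E" if a: "a \<in> E" for a
  proof -
    obtain x where "x \<in> E" "a \<otimes> x = \<one>" using solvable[OF a one] by blast
    moreover have "a \<in> carrier G" "x \<in> carrier G" using a \<open>x \<in> E\<close> assms(2) by auto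
    ultimately have "inv a = x" using inv_comm inv_equality by blast
    with \<open>x \<in> E\<close> show ?thesis by simp
  qed
  then show ?thesis using subgroupI[OF assms(2,3)] closed by blast
qed

lemma l_coset_cancel:
  "\<lbrakk>x \<in> carrier G; A \<subseteq> carrier G; B \<subseteq> carrier G; x <# A = x <# B\<rbrakk> \<Longrightarrow> A = B"
  by (metis l_inv inv_closed lcos_m_assoc lcos_mult_one)

lemma r_coset_cancel:
  "\<lbrakk>x \<in> carrier G; A \<subseteq> carrier G; B \<subseteq> carrier G; A #> x = B #> x\<rbrakk> \<Longrightarrow> A = B"
  by (metis r_inv inv_closed coset_mult_assoc coset_mult_one)

lemma mem_normalizer_iff:
  assumes "E \<subseteq> carrier G"
  shows "g \<in> normalizer G E \<longleftrightarrow> g \<in> carrier G \<and> g <# E = E #> g"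
proof -
  have "g <# E #> inv g = E \<longleftrightarrow> g <# E = E #> g" if g: "g \<in> carrier G"
  proof -
    have "g <# E #> inv g #> g = g <# E"
      using g assms by (simp add: coset_mult_assoc l_coset_subset_G)
    then show ?thesis
      using g assms r_coset_cancel[of g "g <# E #> inv g" E]
      by (metis l_coset_subset_G r_coset_subset_G inv_closed)
  qed
  then show ?thesis using assms unfolding normalizer_def stabilizer_def by auto
qed

lemma normalizer_l_coset_mult:
  assumes "E \<subseteq> carrier G" "E <#> E = E" "g \<in> normalizer G E" "h \<in> normalizer G E"
  shows "(g <# E) <#> (h <# E) = (g \<otimes> h) <# E"
proof -
  have g: "g \<in> carrier G" and h: "h \<in> carrier G" "h <# E = E #> h"
    using assms mem_normalizer_iff by auto
  have "(g <# E) <#> (h <# E) = g <# (E <#> (E #> h))"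
    using assms(1) g h by (simp add: setmult_lcos_assoc r_coset_subset_G)
  also have "\<dots> = g <# (h <# E)"
    using assms(1,2) h by (simp add: setmult_rcos_assoc)
  also have "\<dots> = (g \<otimes> h) <# E"
    using assms(1) g h(1) by (simp add: lcos_m_assoc)
  finally show ?thesis .
qed

lemma right_stabilizer_l_coset:
  assumes "subgroup E G" "x \<in> carrier G"
  shows "right_stabilizer G (x <# E) = E"
proof -
  have E: "E \<subseteq> carrier G" using assms(1) subgroup.subset by blast
  have "(x <# E) #> g = x <# E \<longleftrightarrow> g \<in> E" if g: "g \<in> carrier G" for g
  proof -
    have "(x <# E) #> g = x <# (E #> g)" using assms(2) E g by (simp add: coset_assoc)
    then have "(x <# E) #> g = x <# E \<longleftrightarrow> E #> g = E"
      using l_coset_cancel[OF assms(2) r_coset_subset_G[OF E g] E] by auto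
    also have "\<dots> \<longleftrightarrow> g \<in> E" using coset_join1 coset_join2 assms(1) g by blast
    finally show ?thesis .
  qed
  then show ?thesis using E unfolding right_stabilizer_def by auto
qed

lemma left_stabilizer_r_coset:
  assumes "subgroup E G" "x \<in> carrier G"
  shows "left_stabilizer G (E #> x) = E"
proof -
  have E: "E \<subseteq> carrier G" using assms(1) subgroup.subset by blast
  have "g <# (E #> x) = E #> x \<longleftrightarrow> g \<in> E" if g: "g \<in> carrier G" for g
  proof -
    have "g <# (E #> x) = (g <# E) #> x" using assms(2) E g by (simp add: coset_assoc)
    then have "g <# (E #> x) = E #> x \<longleftrightarrow> g <# E = E"
      using r_coset_cancel[OF assms(2) l_coset_subset_G[OF E g] E] by auto
    also have "\<dots> \<longleftrightarrow> g \<in> E"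
    proof
      have "g \<in> g <# E"
        using g subgroup.one_closed[OF assms(1)] unfolding l_coset_def by force
      then show "g <# E = E \<Longrightarrow> g \<in> E" by simp
    qed (use coset_join3 assms(1) g in blast)
    finally show ?thesis .
  qed
  then show ?thesis using E unfolding left_stabilizer_def by auto
qed

lemma stabilizers_empty:
  "left_stabilizer G {} = carrier G" "right_stabilizer G {} = carrier G"
  unfolding left_stabilizer_def right_stabilizer_def l_coset_def r_coset_def by auto

lemma right_stabilizer_set_mult_left:
  assumes "A \<subseteq> carrier G" "Y \<subseteq> carrier G"
  shows "right_stabilizer G Y \<subseteq> right_stabilizer G (A <#> Y)"
proof
  fix g assume "g \<in> right_stabilizer G Y"
  then have g: "g \<in> carrier G" "Y #> g = Y" unfolding right_stabilizer_def by auto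
  then have "(A <#> Y) #> g = A <#> Y" using assms by (simp flip: setmult_rcos_assoc)
  then show "g \<in> right_stabilizer G (A <#> Y)" using g unfolding right_stabilizer_def by simp
qed

lemma left_stabilizer_set_mult_right:
  assumes "A \<subseteq> carrier G" "Y \<subseteq> carrier G"
  shows "left_stabilizer G Y \<subseteq> left_stabilizer G (Y <#> A)"
proof
  fix g assume "g \<in> left_stabilizer G Y"
  then have g: "g \<in> carrier G" "g <# Y = Y" unfolding left_stabilizer_def by auto
  then have "g <# (Y <#> A) = Y <#> A" using assms by (simp flip: setmult_lcos_assoc)
  then show "g \<in> left_stabilizer G (Y <#> A)" using g unfolding left_stabilizer_def by simp
qed

lemma greenL_power_invariants:
  assumes "greenL (Pow (carrier G)) (set_mult G) X Y"
  shows "right_stabilizer G X = right_stabilizer G Y \<and> (X = {} \<longleftrightarrow> Y = {})"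
proof -
  have X: "X \<subseteq> carrier G" and Y: "Y \<subseteq> carrier G" using assms unfolding greenL_def by auto
  from greenL_imp_mutual_factors[OF assms]
  consider "X = Y" | A B where "A \<subseteq> carrier G" "B \<subseteq> carrier G" "X = A <#> Y" "Y = B <#> X"
    by auto
  then show ?thesis
  proof cases
    case (2 A B)
    have "right_stabilizer G Y \<subseteq> right_stabilizer G X" "right_stabilizer G X \<subseteq> right_stabilizer G Y"
      using right_stabilizer_set_mult_left[OF 2(1) Y] right_stabilizer_set_mult_left[OF 2(2) X]
      by (simp_all flip: 2(3,4))
    moreover have "X = {} \<longleftrightarrow> Y = {}" using 2(3,4) by (auto simp: set_mult_def)
    ultimately show ?thesis by blast
  qed simp
qed

lemma greenR_power_invariants:
  assumes "greenR (Pow (carrier G)) (set_mult G) X Y"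
  shows "left_stabilizer G X = left_stabilizer G Y \<and> (X = {} \<longleftrightarrow> Y = {})"
proof -
  have X: "X \<subseteq> carrier G" and Y: "Y \<subseteq> carrier G" using assms unfolding greenR_def by auto
  from greenR_imp_mutual_factors[OF assms]
  consider "X = Y" | A B where "A \<subseteq> carrier G" "B \<subseteq> carrier G" "X = Y <#> A" "Y = X <#> B"
    by auto
  then show ?thesis
  proof cases
    case (2 A B)
    have "left_stabilizer G Y \<subseteq> left_stabilizer G X" "left_stabilizer G X \<subseteq> left_stabilizer G Y"
      using left_stabilizer_set_mult_right[OF 2(1) Y] left_stabilizer_set_mult_right[OF 2(2) X]
      by (simp_all flip: 2(3,4))
    moreover have "X = {} \<longleftrightarrow> Y = {}" using 2(3,4) by (auto simp: set_mult_def)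
    ultimately show ?thesis by blast
  qed simp
qed

lemma l_coset_eqI:
  assumes E: "subgroup E G" and "X \<subseteq> carrier G" "y \<in> carrier G"
    and "X <#> E = X" "y <# X \<subseteq> E" "x \<in> X"
  shows "X = x <# E"
proof
  show "x <# E \<subseteq> X" using assms(4,6) unfolding l_coset_def set_mult_def by blast
  show "X \<subseteq> x <# E"
  proof
    fix x' assume "x' \<in> X"
    have x: "x \<in> carrier G" "x' \<in> carrier G" using assms(2,6) \<open>x' \<in> X\<close> by auto
    have "y \<otimes> x \<in> E" "y \<otimes> x' \<in> E"
      using assms(5,6) \<open>x' \<in> X\<close> unfolding l_coset_def by auto
    then have "inv (y \<otimes> x) \<otimes> (y \<otimes> x') \<in> E"
      using E by (simp add: subgroup.m_closed subgroup.m_inv_closed)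
    also have "inv (y \<otimes> x) \<otimes> (y \<otimes> x') = inv x \<otimes> x'"
      using x assms(3) by (simp add: inv_mult_group m_assoc[symmetric]) (simp add: m_assoc)
    finally have "x \<otimes> (inv x \<otimes> x') \<in> x <# E" unfolding l_coset_def by blast
    then show "x' \<in> x <# E" using x by (simp add: m_assoc[symmetric])
  qed
qed

lemma r_coset_eqI:
  assumes E: "subgroup E G" and "X \<subseteq> carrier G" "y \<in> carrier G"
    and "E <#> X = X" "X #> y \<subseteq> E" "x \<in> X"
  shows "X = E #> x"
proof
  show "E #> x \<subseteq> X" using assms(4,6) unfolding r_coset_def set_mult_def by blast
  show "X \<subseteq> E #> x"
  proof
    fix x' assume "x' \<in> X"
    have x: "x \<in> carrier G" "x' \<in> carrier G" using assms(2,6) \<open>x' \<in> X\<close> by auto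
    have "x \<otimes> y \<in> E" "x' \<otimes> y \<in> E"
      using assms(5,6) \<open>x' \<in> X\<close> unfolding r_coset_def by auto
    then have "(x' \<otimes> y) \<otimes> inv (x \<otimes> y) \<in> E"
      using E by (simp add: subgroup.m_closed subgroup.m_inv_closed)
    also have "(x' \<otimes> y) \<otimes> inv (x \<otimes> y) = x' \<otimes> inv x"
      using x assms(3) by (simp add: inv_mult_group m_assoc[symmetric]) (simp add: m_assoc)
    finally have "(x' \<otimes> inv x) \<otimes> x \<in> E #> x" unfolding r_coset_def by blast
    then show "x' \<in> E #> x" using x by (simp add: m_assoc)
  qed
qed

lemma grp_union_two_sided_coset:
  assumes fin: "finite (carrier G)"
    and X: "X \<in> power_grp_union" "X \<noteq> {}"
  obtains E where "subgroup E G" "\<And>x. x \<in> X \<Longrightarrow> X = x <# E \<and> X = E #> x"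
proof -
  obtain H where H: "is_subgrp (Pow (carrier G)) (set_mult G) H" and "X \<in> H"
    using X(1) unfolding grp_union_def by blast
  then have HG: "H \<subseteq> Pow (carrier G)"
    and "\<exists>E\<in>H. \<forall>Z\<in>H. E <#> Z = Z \<and> Z <#> E = Z \<and> (\<exists>W\<in>H. Z <#> W = E \<and> W <#> Z = E)"
    unfolding is_subgrp_def by auto
  then obtain E where "E \<in> H"
    and E_unit: "\<forall>Z\<in>H. E <#> Z = Z \<and> Z <#> E = Z \<and> (\<exists>W\<in>H. Z <#> W = E \<and> W <#> Z = E)"
    by (elim bexE)
  have identity: "\<And>Z. Z \<in> H \<Longrightarrow> E <#> Z = Z \<and> Z <#> E = Z"
    and inverses: "\<And>Z. Z \<in> H \<Longrightarrow> \<exists>W\<in>H. Z <#> W = E \<and> W <#> Z = E"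
    using E_unit by simp_all
  obtain Y where "Y \<in> H" and inverse: "X <#> Y = E" "Y <#> X = E"
    using inverses[OF \<open>X \<in> H\<close>] by blast
  have carrier: "E \<subseteq> carrier G" "X \<subseteq> carrier G" "Y \<subseteq> carrier G"
    using HG \<open>E \<in> H\<close> \<open>X \<in> H\<close> \<open>Y \<in> H\<close> by auto
  have "E \<noteq> {}"
  proof
    assume "E = {}"
    then have "E <#> X = {}" by (simp add: set_mult_def)
    then show False using identity[OF \<open>X \<in> H\<close>] X(2) by simp
  qed
  moreover have "E <#> E = E" using identity[OF \<open>E \<in> H\<close>] by simp
  ultimately have E: "subgroup E G" using finite_idempotent_subgroup[OF fin carrier(1)] by simp
  have "Y \<noteq> {}"
  proof
    assume "Y = {}"
    then have "Y <#> X = {}" by (simp add: set_mult_def)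
    then show False using inverse(2) \<open>E \<noteq> {}\<close> by simp
  qed
  then obtain y where "y \<in> Y" by blast
  have y: "y \<in> carrier G" using \<open>y \<in> Y\<close> carrier(3) by blast
  have "y <# X \<subseteq> Y <#> X" "X #> y \<subseteq> X <#> Y"
    using \<open>y \<in> Y\<close> unfolding l_coset_eq_set_mult r_coset_eq_set_mult
    by (simp_all add: mono_set_mult)
  then have "y <# X \<subseteq> E" "X #> y \<subseteq> E" using inverse by simp_all
  moreover have "X <#> E = X" "E <#> X = X" using identity[OF \<open>X \<in> H\<close>] by simp_all
  ultimately show ?thesis
    using that[OF E] l_coset_eqI[OF E carrier(2) y] r_coset_eqI[OF E carrier(2) y] by metis
qed

lemma grp_union_member:
  assumes fin: "finite (carrier G)"
    and X: "X \<in> power_grp_union" "x \<in> X"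
  shows "subgroup (right_stabilizer G X) G"
    and "left_stabilizer G X = right_stabilizer G X"
    and "x \<in> normalizer G (right_stabilizer G X)"
    and "X = x <# right_stabilizer G X"
proof -
  obtain E where E: "subgroup E G" and coset: "X = x <# E" "X = E #> x"
    using grp_union_two_sided_coset[OF fin X(1)] X(2) by (metis empty_iff)
  have x: "x \<in> carrier G" using grp_union_subset X by blast
  have stab: "right_stabilizer G X = E" "left_stabilizer G X = E"
    using right_stabilizer_l_coset[OF E x] left_stabilizer_r_coset[OF E x] coset by simp_all
  show "subgroup (right_stabilizer G X) G" "left_stabilizer G X = right_stabilizer G X"
    "X = x <# right_stabilizer G X"
    using stab E coset by simp_all
  show "x \<in> normalizer G (right_stabilizer G X)"
    using mem_normalizer_iff[OF subgroup.subset[OF E]] x coset stab by simp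
qed

lemma grp_union_left_stabilizer_eq:
  assumes "finite (carrier G)" "X \<in> power_grp_union"
  shows "left_stabilizer G X = right_stabilizer G X"
proof (cases "X = {}")
  case True
  then show ?thesis by (simp add: stabilizers_empty)
next
  case False
  then obtain x where "x \<in> X" by blast
  then show ?thesis using grp_union_member(2)[OF assms] by simp
qed

lemma rho_power_invariants:
  assumes "finite (carrier G)"
  shows "rho (Pow (carrier G)) (set_mult G) \<subseteq>
    {(X, Y). X \<in> power_grp_union \<and> Y \<in> power_grp_union \<and>
      right_stabilizer G X = right_stabilizer G Y \<and> (X = {} \<longleftrightarrow> Y = {})}"
    (is "_ \<subseteq> ?R")
proof -
  have "(X, Y) \<in> ?R"
    if "X \<in> power_grp_union" "Y \<in> power_grp_union"
      and "greenL (Pow (carrier G)) (set_mult G) X Y \<or> greenR (Pow (carrier G)) (set_mult G) X Y"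
    for X Y
    using that(3)
  proof
    assume "greenL (Pow (carrier G)) (set_mult G) X Y"
    then show ?thesis using greenL_power_invariants that(1,2) by simp
  next
    assume "greenR (Pow (carrier G)) (set_mult G) X Y"
    then show ?thesis
      using greenR_power_invariants grp_union_left_stabilizer_eq[OF assms that(1)]
        grp_union_left_stabilizer_eq[OF assms that(2)] that(1,2) by simp
  qed
  then have "rho (Pow (carrier G)) (set_mult G) \<subseteq> ?R\<^sup>+"
    unfolding rho_def by (intro trancl_mono_subset) (auto simp: Id_on_def)
  moreover have "trans ?R" unfolding trans_def by simp
  ultimately show ?thesis by simp
qed

lemma normalizer_l_cosets_greenR:
  assumes "E \<subseteq> carrier G" "E <#> E = E" "g \<in> normalizer G E" "h \<in> normalizer G E"
  shows "greenR (Pow (carrier G)) (set_mult G) (g <# E) (h <# E)"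
proof (rule greenR_if_mutual_factors[OF semigrp_power])
  have N: "subgroup (normalizer G E) G" using normalizer_imp_subgroup[OF assms(1)] .
  have g: "g \<in> carrier G" and h: "h \<in> carrier G"
    using assms(3,4) mem_normalizer_iff[OF assms(1)] by auto
  have "inv h \<otimes> g \<in> normalizer G E" "inv g \<otimes> h \<in> normalizer G E"
    using assms(3,4) N by (simp_all add: subgroup.m_closed subgroup.m_inv_closed)
  then show "g <# E = (h <# E) <#> ((inv h \<otimes> g) <# E)"
    and "h <# E = (g <# E) <#> ((inv g \<otimes> h) <# E)"
    using normalizer_l_coset_mult[OF assms(1,2)] assms(3,4) g h by (simp_all add: m_assoc[symmetric])
  show "g <# E \<in> Pow (carrier G)" "h <# E \<in> Pow (carrier G)"
    "(inv h \<otimes> g) <# E \<in> Pow (carrier G)" "(inv g \<otimes> h) <# E \<in> Pow (carrier G)"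
    using assms(1) g h by (simp_all add: l_coset_subset_G)
qed

lemma rho_class_in_normalizer_cosets:
  assumes fin: "finite (carrier G)" and C: "C \<in> rho_classes (Pow (carrier G)) (set_mult G)"
  obtains X0 E where "X0 \<in> C" "E \<subseteq> carrier G" "E <#> E = E"
    "C \<subseteq> (\<lambda>g. g <# E) ` normalizer G E"
proof -
  obtain X0 where X0: "X0 \<in> power_grp_union"
    and C_def: "C = rho (Pow (carrier G)) (set_mult G) `` {X0}"
    using C unfolding rho_classes_def quotient_def by blast
  have "X0 \<in> C" using X0 unfolding C_def rho_def by (auto intro: r_into_trancl)
  have member: "Y \<in> power_grp_union"
    "right_stabilizer G Y = right_stabilizer G X0" "Y = {} \<longleftrightarrow> X0 = {}" if "Y \<in> C" for Y
    using that rho_power_invariants[OF fin] unfolding C_def by auto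
  show ?thesis
  proof (cases "X0 = {}")
    case True
    have "\<one> \<in> normalizer G {}"
      using subgroup.one_closed[OF normalizer_imp_subgroup[of "{}"]] by simp
    moreover have "\<one> <# {} = {}" unfolding l_coset_def by simp
    ultimately have "C \<subseteq> (\<lambda>g. g <# {}) ` normalizer G {}" using member(3) True by blast
    then show ?thesis by (intro that[OF \<open>X0 \<in> C\<close>, of "{}"]) (simp_all add: set_mult_def)
  next
    case False
    define E where "E = right_stabilizer G X0"
    obtain x0 where "x0 \<in> X0" using False by blast
    then have E: "subgroup E G" unfolding E_def using grp_union_member(1)[OF fin X0] by simp
    have "C \<subseteq> (\<lambda>g. g <# E) ` normalizer G E"
    proof
      fix Y assume "Y \<in> C"
      then obtain y where "y \<in> Y" using member(3) False by blast
      then show "Y \<in> (\<lambda>g. g <# E) ` normalizer G E"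
        using grp_union_member(3,4)[OF fin member(1)[OF \<open>Y \<in> C\<close>]] member(2)[OF \<open>Y \<in> C\<close>]
        unfolding E_def by auto
    qed
    then show ?thesis
      using that[OF \<open>X0 \<in> C\<close> subgroup.subset[OF E] subgroup_mult_id[OF E]] by simp
  qed
qed

lemma power_block_divides:
  assumes fin: "finite (carrier G)" and C: "C \<in> rho_classes (Pow (carrier G)) (set_mult G)"
  shows "divides (block_carrier (Pow (carrier G)) (set_mult G) C)
    (block_mult (Pow (carrier G)) (set_mult G) C) (carrier G) (mult G)"
proof -
  obtain X0 E where "X0 \<in> C" and E: "E \<subseteq> carrier G" "E <#> E = E"
    and C_cosets: "C \<subseteq> (\<lambda>g. g <# E) ` normalizer G E"
    using rho_class_in_normalizer_cosets[OF fin C] by blast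
  define Q where "Q = (\<lambda>g. g <# E) ` normalizer G E"
  let ?T = "gen_subsemigrp (set_mult G) C"
  have N: "subgroup (normalizer G E) G" using normalizer_imp_subgroup[OF E(1)] .
  have "a <#> b \<in> Q" if "a \<in> Q" "b \<in> Q" for a b
    using that normalizer_l_coset_mult[OF E] subgroup.m_closed[OF N] unfolding Q_def by auto
  then have T_cosets: "?T \<subseteq> Q" using gen_subsemigrp_subset C_cosets unfolding Q_def by blast
  have "block_ideal (Pow (carrier G)) (set_mult G) C = {}"
  proof (rule block_ideal_eq_empty[OF \<open>X0 \<in> C\<close>])
    obtain g where g: "g \<in> normalizer G E" "X0 = g <# E" using C_cosets \<open>X0 \<in> C\<close> by blast
    then show "X0 \<in> Pow (carrier G)"
      using l_coset_subset_G[OF E(1)] subgroup.mem_carrier[OF N] by simp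
    show "greenR (Pow (carrier G)) (set_mult G) X0 t" if "t \<in> ?T" for t
      using that T_cosets normalizer_l_cosets_greenR[OF E g(1)] g(2) unfolding Q_def by blast
  qed
  note no_zero = block_carrier_no_zero[OF this] block_mult_no_zero[OF this]
  show ?thesis
    unfolding no_zero(1)
  proof (rule divides_if_subsemigroup_of_hom_image[where \<phi> = "\<lambda>g. Some (g <# E)"])
    show "normalizer G E \<subseteq> carrier G" using subgroup.subset[OF N] .
    show "x \<otimes> y \<in> normalizer G E" if "x \<in> normalizer G E" "y \<in> normalizer G E" for x y
      using subgroup.m_closed[OF N that] .
    show "Some ((x \<otimes> y) <# E) =
        block_mult (Pow (carrier G)) (set_mult G) C (Some (x <# E)) (Some (y <# E))"
      if "x \<in> normalizer G E" "y \<in> normalizer G E" for x y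
      using normalizer_l_coset_mult[OF E that] no_zero(2) by simp
    show "Some ` ?T \<subseteq> (\<lambda>g. Some (g <# E)) ` normalizer G E"
      using T_cosets unfolding Q_def by blast
    show "block_mult (Pow (carrier G)) (set_mult G) C a b \<in> Some ` ?T"
      if "a \<in> Some ` ?T" "b \<in> Some ` ?T" for a b
      using that no_zero(2) gen_subsemigrp.mult[of _ "set_mult G" C] by auto
  qed
qed

end

theorem mainTheorem2:
  fixes G :: "('a, 'b) monoid_scheme"
  assumes "group G" and "finite (carrier G)"
  shows "\<forall>C \<in> rho_classes (Pow (carrier G)) (set_mult G).
           divides (block_carrier (Pow (carrier G)) (set_mult G) C)
                   (block_mult (Pow (carrier G)) (set_mult G) C)
                   (carrier G) (mult G)"
  using group.power_block_divides[OF assms] by blast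

end
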